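(* Let $P=\eta\otimes\pi$ be a distribution of the longitudinal data and $\hat P=\hat\eta\otimes\hat\pi$ an estimate of it, where $\eta=(\eta_1,\ldots,\eta_{\tau+1})$ are the non-treatment conditional distributions and $\pi=(\pi_1,\ldots,\pi_\tau)$ the treatment mechanisms (see context), with $g_t\ll\hat\pi_t$ for all $t$. Define the second-order remainder $R_2(\hat P,P)$ by $$\psi(\hat P)-\psi(P)=-P D^\star(\hat P)+R_2(\hat P,P).$$ Then $$R_2(\hat P,P)=\sum_{t=1}^\tau\int_{\mathcal{O}_{1:t}}\frac{dg_{1:t}}{d\hat\pi_{1:t}}\Big[\int V_{t+1}(\hat\eta)\,d\eta_{t+1}-Q_t(\hat\eta)\Big]\,d(\pi_{1:t}-\hat\pi_{1:t})\,d\eta_{1:t}.$$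
   Context: Observed data $O=(W,L_1,A_1,Y_1,\ldots,L_\tau,A_\tau,Y_\tau)$, $Y=Y_\tau$, $pa(A_t)=(W,L_{1:t},A_{1:t-1},Y_{1:t-1})$, $pa(Y_t)=(pa(A_t),A_t)$. The joint law factorizes as $P=\eta\otimes\pi$, where $\eta_1$ is the law of $(W,L_1)$, $\eta_t$ ($t=2,\ldots,\tau+1$) is the conditional law of $(Y_{t-1},L_t)$ given $pa(Y_{t-1})$ (with $\eta_{\tau+1}$ the law of $Y_\tau$ given $pa(Y_\tau)$), and $\pi_t$ is the conditional law of $A_t$ given $pa(A_t)$. $g=(g_t)$ is a user-specified treatment policy (conditional laws of $A_t$ given $pa(A_t)$). Products like $\pi_{1:t}$, $\eta_{1:t}$, $g_{1:t}$ denote the iterated (disintegrated) measures along the time ordering, and $\mathcal{O}_{1:t}$ the space of histories through time $t$. For a given $\eta$: $Q_t(\eta)=\int Y\,d(g_{t+1:\tau}\otimes\eta_{t+1:\tau+1})$ (the $g$-computation value $\mathbb{E}_g[Y\mid pa(Y_t)]$), $V_t(\eta)=\int Y\,d(g_{t:\tau}\otimes\eta_{t+1:\tau+1})=\mathbb{E}_g[Y\mid pa(A_t)]$ for $t\le\tau$, and $V_{\tau+1}=Y_\tau$. The target functional is $\psi(P)=\mathbb{E}_gY=\int V_1(\eta)\,d\eta_1$. The efficient influence function is $D^\star(P)=(V_1-\psi(P))+\sum_{t=1}^\tau I_t(V_{t+1}-Q_t)$ with $I_t=\prod_{s=1}^t dg_s/d\pi_s$, all quantities evaluated at $P$. $Pf=\int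 f\,dP$. *)

theory Defs
  imports "HOL-Probability.Probability"
begin

text \<open>
Encoding of the longitudinal data (0-based positions):
the observation is a function w :: nat => 'w, of which only the positions
0 .. 2*tau are relevant, position i taking values in the measurable space M i.
Position 2*s (s = 0..tau) carries the non-treatment block X_{s+1}
(X_1 = (W,L_1), X_{s+1} = (Y_s, L_{s+1}), X_{tau+1} = Y_tau),
position 2*s+1 (s = 0..tau-1) carries the treatment A_{s+1}.
A history of length n is an element of PiM {..<n} M (first n positions).
A kernel at position i maps histories of length i to laws on M i.
\<close>

definition interleave :: "(nat \<Rightarrow> 'k) \<Rightarrow> (nat \<Rightarrow> 'k) \<Rightarrow> nat \<Rightarrow> 'k" where
  "interleave E A i = (if even i then E (i div 2) else A (i div 2))"

fun law :: "(nat \<Rightarrow> 'w measure) \<Rightarrow> (nat \<Rightarrow> (nat \<Rightarrow> 'w) \<Rightarrow> 'w measure) \<Rightarrow> nat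
            \<Rightarrow> (nat \<Rightarrow> 'w) measure" where
  "law M K 0 = return (PiM {} M) (\<lambda>_. undefined)"
| "law M K (Suc n) =
     bind (law M K n) (\<lambda>h. distr (K n h) (PiM {..<Suc n} M) (\<lambda>x. h(n := x)))"

text \<open>cont K Y N m h: integrate out the last m of the N positions, starting
from the history h restricted to its first N - m positions, and evaluate Y at
position N - 1.\<close>
fun cont :: "(nat \<Rightarrow> (nat \<Rightarrow> 'w) \<Rightarrow> 'w measure) \<Rightarrow> ('w \<Rightarrow> real) \<Rightarrow> nat \<Rightarrow> nat
             \<Rightarrow> (nat \<Rightarrow> 'w) \<Rightarrow> real" where
  "cont K Y N 0 h = Y (h (N - 1))"
| "cont K Y N (Suc m) h =
     (\<integral>x. cont K Y N m ((restrict h {..<N - Suc m})(N - Suc m := x))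
        \<partial>(K (N - Suc m) (restrict h {..<N - Suc m})))"

text \<open>val K Y N n h = E_K[Y | first n positions = h] (g-computation value).\<close>
definition val :: "(nat \<Rightarrow> (nat \<Rightarrow> 'w) \<Rightarrow> 'w measure) \<Rightarrow> ('w \<Rightarrow> real) \<Rightarrow> nat \<Rightarrow> nat
             \<Rightarrow> (nat \<Rightarrow> 'w) \<Rightarrow> real" where
  "val K Y N n h = cont K Y N (N - n) h"

text \<open>Target functional psi = E_g Y, depending on the non-treatment kernels E.\<close>
definition psi :: "(nat \<Rightarrow> (nat \<Rightarrow> 'w) \<Rightarrow> 'w measure) \<Rightarrow> (nat \<Rightarrow> (nat \<Rightarrow> 'w) \<Rightarrow> 'w measure)
             \<Rightarrow> ('w \<Rightarrow> real) \<Rightarrow> nat \<Rightarrow> real" where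
  "psi E g Y \<tau> = val (interleave E g) Y (2 * \<tau> + 1) 0 (\<lambda>_. undefined)"

text \<open>Cumulative weight I_t = prod_{s=1}^t dg_s/dpi_s, where dens r (0-based)
is a version of dg_{r+1}/dpi_{r+1}, a function of histories of length 2r+2.\<close>
definition wt :: "(nat \<Rightarrow> (nat \<Rightarrow> 'w) \<Rightarrow> real) \<Rightarrow> nat \<Rightarrow> (nat \<Rightarrow> 'w) \<Rightarrow> real" where
  "wt dens t w = (\<Prod>r<t. dens r (restrict w {..<2 * r + 2}))"

definition EIF :: "(nat \<Rightarrow> (nat \<Rightarrow> 'w) \<Rightarrow> 'w measure) \<Rightarrow> (nat \<Rightarrow> (nat \<Rightarrow> 'w) \<Rightarrow> 'w measure)
             \<Rightarrow> (nat \<Rightarrow> (nat \<Rightarrow> 'w) \<Rightarrow> real) \<Rightarrow> ('w \<Rightarrow> real) \<Rightarrow> nat \<Rightarrow> (nat \<Rightarrow> 'w) \<Rightarrow> real" where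
  "EIF E g dens Y \<tau> w =
     (val (interleave E g) Y (2 * \<tau> + 1) 1 (restrict w {..<1}) - psi E g Y \<tau>)
     + (\<Sum>t\<in>{1..\<tau>}. wt dens t w *
          (val (interleave E g) Y (2 * \<tau> + 1) (2 * t + 1) (restrict w {..<2 * t + 1})
           - val (interleave E g) Y (2 * \<tau> + 1) (2 * t) (restrict w {..<2 * t})))"

end

theory Submission
  imports Defs
begin

(* Write Vhat_k for the g-computation values of the estimated non-treatment kernels (functions
   of histories of length k) and I_t for the cumulative weights. Under any law of the data, the
   mean of the t-th summand I_t (Vhat_{2t+1} - Vhat_{2t}) of D*(Phat) is computed by integrating
   out the non-treatment coordinate at position 2t first:
     A_t = integral of I_t [integral Vhat_{2t+1} d eta_{t+1} - Vhat_{2t}] over histories of length 2t,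
   so P D*(Phat) = P Vhat_1 - psi(Phat) + sum_t A_t(pi). When pi is replaced by pihat, I_t is the
   density of the law under (eta, g) with respect to the law under (eta, pihat), so
   A_t(pihat) = E_{eta,g} Vhat_{2t+1} - E_{eta,g} Vhat_{2t-1}, since Vhat_{2t-1} is the g-average of
   Vhat_{2t}. These differences telescope to psi(P) - P Vhat_1, and subtracting the two identities
   leaves R_2 = sum_t (A_t(pi) - A_t(pihat)). *)

section \<open>Kernels on histories and their iterated laws\<close>

definition extend_kernel :: "(nat \<Rightarrow> 'w measure) \<Rightarrow> nat \<Rightarrow> ((nat \<Rightarrow> 'w) \<Rightarrow> 'w measure)
    \<Rightarrow> (nat \<Rightarrow> 'w) \<Rightarrow> (nat \<Rightarrow> 'w) measure" where
  "extend_kernel M n \<kappa> h = distr (\<kappa> h) (PiM {..<Suc n} M) (\<lambda>x. h(n := x))"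

lemma law_Suc_extend_kernel: "law M K (Suc n) = bind (law M K n) (extend_kernel M n (K n))"
  by (simp add: extend_kernel_def[abs_def])

declare law.simps(2)[simp del]

definition valid_kernels :: "(nat \<Rightarrow> 'w measure) \<Rightarrow> (nat \<Rightarrow> (nat \<Rightarrow> 'w) \<Rightarrow> 'w measure) \<Rightarrow> nat \<Rightarrow> bool" where
  "valid_kernels M K n \<longleftrightarrow> (\<forall>i<n. K i \<in> measurable (PiM {..<i} M) (prob_algebra (M i)))"

lemma valid_kernelsD: "valid_kernels M K n \<Longrightarrow> i < n \<Longrightarrow> K i \<in> measurable (PiM {..<i} M) (prob_algebra (M i))"
  by (simp add: valid_kernels_def)

lemma valid_kernels_mono: "valid_kernels M K n \<Longrightarrow> m \<le> n \<Longrightarrow> valid_kernels M K m"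
  by (simp add: valid_kernels_def)

lemma interleave_even [simp]: "interleave X Z (2 * s) = X s"
  and interleave_odd [simp]: "interleave X Z (Suc (2 * s)) = Z s"
  by (simp_all add: interleave_def)

lemma valid_kernels_interleave:
  assumes "\<And>s. s \<le> \<tau> \<Longrightarrow> X s \<in> measurable (PiM {..<2 * s} M) (prob_algebra (M (2 * s)))"
    and "\<And>s. s < \<tau> \<Longrightarrow> Z s \<in> measurable (PiM {..<2 * s + 1} M) (prob_algebra (M (2 * s + 1)))"
  shows "valid_kernels M (interleave X Z) (2 * \<tau> + 1)"
  unfolding valid_kernels_def
proof (intro allI impI)
  fix i assume i: "i < 2 * \<tau> + 1"
  show "interleave X Z i \<in> measurable (PiM {..<i} M) (prob_algebra (M i))"
  proof (cases "even i")
    case True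
    then obtain s where "i = 2 * s" by blast
    then show ?thesis using assms(1)[of s] i by simp
  next
    case False
    then obtain s where "i = Suc (2 * s)" using oddE by fastforce
    then show ?thesis using assms(2)[of s] i by simp
  qed
qed

lemma law_cong: "(\<And>i. i < n \<Longrightarrow> K i = K' i) \<Longrightarrow> law M K n = law M K' n"
  by (induction n) (simp_all add: law_Suc_extend_kernel)

lemma prob_kernel_apply:
  assumes "\<kappa> \<in> measurable (PiM {..<n} M) (prob_algebra (M n))" "h \<in> space (PiM {..<n} M)"
  shows "prob_space (\<kappa> h)" "sets (\<kappa> h) = sets (M n)" "space (\<kappa> h) = space (M n)"
proof -
  have "\<kappa> h \<in> space (prob_algebra (M n))" using measurable_space[OF assms] .
  then show "prob_space (\<kappa> h)" "sets (\<kappa> h) = sets (M n)" by (auto simp: space_prob_algebra)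
  then show "space (\<kappa> h) = space (M n)" by (intro sets_eq_imp_space_eq)
qed

lemma measurable_fun_upd_history:
  assumes "h \<in> space (PiM {..<n} M)" "sets N = sets (M n)"
  shows "(\<lambda>x. h(n := x)) \<in> measurable N (PiM {..<Suc n} M)"
proof -
  have "(\<lambda>x. h(n := x)) \<in> measurable (M n) (PiM (insert n {..<n}) M)"
    using assms(1) by (intro measurable_component_update) auto
  then show ?thesis using lessThan_Suc[of n] by (simp add: measurable_cong_sets[OF assms(2) refl])
qed

lemma restrict_fun_upd_history:
  "h \<in> space (PiM {..<n::nat} M) \<Longrightarrow> restrict (h(n := x)) {..<n} = h"
  by (metis PiE_restrict space_PiM lessThan_iff less_irrefl restrict_fupd)

lemma measurable_restrict_history: "(m::nat) \<le> n \<Longrightarrow> (\<lambda>w. restrict w {..<m}) \<in> measurable (PiM {..<n} M) (PiM {..<m} M)"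
  by (intro measurable_restrict_subset) auto

lemma measurable_extend_kernel:
  assumes "\<kappa> \<in> measurable (PiM {..<n} M) (prob_algebra (M n))"
  shows "extend_kernel M n \<kappa> \<in> measurable (PiM {..<n} M) (prob_algebra (PiM {..<Suc n} M))"
  unfolding extend_kernel_def
proof (rule measurable_distr_prob_space2[OF assms])
  have "(\<lambda>(f, y). f(n := y)) \<in> measurable (PiM {..<n} M \<Otimes>\<^sub>M M n) (PiM (insert n {..<n}) M)"
    by (rule measurable_add_dim)
  then show "(\<lambda>(x, y). x(n := y)) \<in> PiM {..<n} M \<Otimes>\<^sub>M M n \<rightarrow>\<^sub>M PiM {..<Suc n} M"
    using lessThan_Suc[of n] by simp
qed

lemma measurable_extend_kernel_subprob:
  assumes "sets L = sets (PiM {..<n} M)" "\<kappa> \<in> measurable (PiM {..<n} M) (prob_algebra (M n))"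
  shows "extend_kernel M n \<kappa> \<in> measurable L (subprob_algebra (PiM {..<Suc n} M))"
  using measurable_prob_algebraD[OF measurable_extend_kernel[OF assms(2)]]
  by (simp add: measurable_cong_sets[OF assms(1) refl])

lemma sets_bind_extend_kernel:
  assumes "sets L = sets (PiM {..<n} M)" "space L \<noteq> {}"
    and "\<kappa> \<in> measurable (PiM {..<n} M) (prob_algebra (M n))"
  shows "sets (bind L (extend_kernel M n \<kappa>)) = sets (PiM {..<Suc n} M)"
  using measurable_extend_kernel_subprob[OF assms(1,3)] assms(2)
  by (intro sets_bind) (auto dest: subprob_measurableD(2))

lemma law_in_prob_algebra: "valid_kernels M K n \<Longrightarrow> law M K n \<in> space (prob_algebra (PiM {..<n} M))"
proof (induction n)
  case 0
  have "(\<lambda>_. undefined) \<in> space (PiM {} M)" by simp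
  then show ?case by (auto simp: space_prob_algebra intro!: prob_space_return)
next
  case (Suc n)
  then have L: "law M K n \<in> space (prob_algebra (PiM {..<n} M))"
    using valid_kernels_mono by fastforce
  have k: "extend_kernel M n (K n) \<in> measurable (PiM {..<n} M) (prob_algebra (PiM {..<Suc n} M))"
    using Suc.prems by (intro measurable_extend_kernel valid_kernelsD) auto
  show ?case unfolding law_Suc_extend_kernel
    using prob_space_bind'[OF L k] sets_bind'[OF L k] by (simp add: space_prob_algebra)
qed

lemma
  assumes "valid_kernels M K n"
  shows prob_space_law: "prob_space (law M K n)"
    and sets_law: "sets (law M K n) = sets (PiM {..<n} M)"
    and space_law: "space (law M K n) = space (PiM {..<n} M)"
proof -
  show "prob_space (law M K n)" and sets: "sets (law M K n) = sets (PiM {..<n} M)"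
    using law_in_prob_algebra[OF assms] by (auto simp: space_prob_algebra)
  show "space (law M K n) = space (PiM {..<n} M)" using sets_eq_imp_space_eq[OF sets] .
qed

lemma nn_integral_bind_extend_kernel:
  assumes L: "sets L = sets (PiM {..<n} M)"
    and \<kappa>: "\<kappa> \<in> measurable (PiM {..<n} M) (prob_algebra (M n))"
    and f: "f \<in> borel_measurable (PiM {..<Suc n} M)"
  shows "(\<integral>\<^sup>+w. f w \<partial>bind L (extend_kernel M n \<kappa>)) = (\<integral>\<^sup>+h. \<integral>\<^sup>+x. f (h(n := x)) \<partial>\<kappa> h \<partial>L)"
proof -
  have "(\<integral>\<^sup>+w. f w \<partial>bind L (extend_kernel M n \<kappa>)) = (\<integral>\<^sup>+h. \<integral>\<^sup>+w. f w \<partial>extend_kernel M n \<kappa> h \<partial>L)"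
    by (rule nn_integral_bind[OF f measurable_extend_kernel_subprob[OF L \<kappa>]])
  also have "\<dots> = (\<integral>\<^sup>+h. \<integral>\<^sup>+x. f (h(n := x)) \<partial>\<kappa> h \<partial>L)"
  proof (rule nn_integral_cong)
    fix h assume "h \<in> space L"
    then have h: "h \<in> space (PiM {..<n} M)" using sets_eq_imp_space_eq[OF L] by simp
    show "(\<integral>\<^sup>+w. f w \<partial>extend_kernel M n \<kappa> h) = (\<integral>\<^sup>+x. f (h(n := x)) \<partial>\<kappa> h)"
      unfolding extend_kernel_def
      by (rule nn_integral_distr[OF measurable_fun_upd_history[OF h prob_kernel_apply(2)[OF \<kappa> h]]])
        (simp add: f)
  qed
  finally show ?thesis .
qed

lemma integral_bind_extend_kernel:
  fixes f :: "_ \<Rightarrow> real"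
  assumes L: "sets L = sets (PiM {..<n} M)" and fin: "finite_measure L"
    and \<kappa>: "\<kappa> \<in> measurable (PiM {..<n} M) (prob_algebra (M n))"
    and f: "f \<in> borel_measurable (PiM {..<Suc n} M)"
    and B: "\<And>w. w \<in> space (PiM {..<Suc n} M) \<Longrightarrow> \<bar>f w\<bar> \<le> B"
  shows "(\<integral>w. f w \<partial>bind L (extend_kernel M n \<kappa>)) = (\<integral>h. \<integral>x. f (h(n := x)) \<partial>\<kappa> h \<partial>L)"
proof -
  have ae: "AE h in L. emeasure (extend_kernel M n \<kappa> h) (space (extend_kernel M n \<kappa> h)) \<le> ennreal 1"
  proof (rule AE_I2)
    fix h assume "h \<in> space L"
    then have h: "h \<in> space (PiM {..<n} M)" using sets_eq_imp_space_eq[OF L] by simp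
    interpret prob_space "\<kappa> h" using prob_kernel_apply(1)[OF \<kappa> h] .
    show "emeasure (extend_kernel M n \<kappa> h) (space (extend_kernel M n \<kappa> h)) \<le> ennreal 1"
      unfolding extend_kernel_def
      by (simp add: emeasure_distr measurable_fun_upd_history[OF h prob_kernel_apply(2)[OF \<kappa> h]] emeasure_le_1)
  qed
  have "(\<integral>w. f w \<partial>bind L (extend_kernel M n \<kappa>)) = (\<integral>h. \<integral>w. f w \<partial>extend_kernel M n \<kappa> h \<partial>L)"
    by (rule integral_bind[OF f B measurable_extend_kernel_subprob[OF L \<kappa>] fin ae])
  also have "\<dots> = (\<integral>h. \<integral>x. f (h(n := x)) \<partial>\<kappa> h \<partial>L)"
  proof (rule Bochner_Integration.integral_cong[OF refl])
    fix h assume "h \<in> space L"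
    then have h: "h \<in> space (PiM {..<n} M)" using sets_eq_imp_space_eq[OF L] by simp
    show "(\<integral>w. f w \<partial>extend_kernel M n \<kappa> h) = (\<integral>x. f (h(n := x)) \<partial>\<kappa> h)"
      unfolding extend_kernel_def
      by (rule integral_distr[OF measurable_fun_upd_history[OF h prob_kernel_apply(2)[OF \<kappa> h]]])
        (simp add: f)
  qed
  finally show ?thesis .
qed

lemma integral_law_Suc:
  fixes f :: "_ \<Rightarrow> real"
  assumes K: "valid_kernels M K (Suc n)"
    and f: "f \<in> borel_measurable (PiM {..<Suc n} M)"
    and B: "\<And>w. w \<in> space (PiM {..<Suc n} M) \<Longrightarrow> \<bar>f w\<bar> \<le> B"
  shows "(\<integral>w. f w \<partial>law M K (Suc n)) = (\<integral>h. \<integral>x. f (h(n := x)) \<partial>K n h \<partial>law M K n)"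
proof -
  have Kn: "valid_kernels M K n" using valid_kernels_mono[OF K] by simp
  show ?thesis
    unfolding law_Suc_extend_kernel
    using prob_space_law[OF Kn] valid_kernelsD[OF K]
    by (intro integral_bind_extend_kernel[OF sets_law[OF Kn] _ _ f B]) (auto simp: prob_space_def)
qed

lemma integrable_bounded_prob:
  fixes f :: "_ \<Rightarrow> real"
  assumes "prob_space \<mu>" "f \<in> borel_measurable \<mu>" "\<And>x. x \<in> space \<mu> \<Longrightarrow> \<bar>f x\<bar> \<le> B"
  shows "integrable \<mu> f"
proof -
  interpret prob_space \<mu> by fact
  show ?thesis using assms(2,3) by (intro integrable_const_bound[where B=B]) (auto intro!: AE_I2)
qed

lemma abs_integral_le_bound_prob:
  fixes f :: "_ \<Rightarrow> real"
  assumes "prob_space \<mu>" "f \<in> borel_measurable \<mu>" "\<And>x. x \<in> space \<mu> \<Longrightarrow> \<bar>f x\<bar> \<le> B"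
  shows "\<bar>\<integral>x. f x \<partial>\<mu>\<bar> \<le> B"
proof -
  interpret prob_space \<mu> by fact
  have "\<bar>\<integral>x. f x \<partial>\<mu>\<bar> \<le> (\<integral>x. \<bar>f x\<bar> \<partial>\<mu>)" by (rule integral_abs_bound)
  also have "\<dots> \<le> (\<integral>x. B \<partial>\<mu>)"
    using integrable_bounded_prob[OF assms] assms(3) by (intro integral_mono) auto
  also have "\<dots> = B" by (simp add: prob_space)
  finally show ?thesis .
qed

lemma integrable_law_bounded:
  fixes f :: "_ \<Rightarrow> real"
  assumes "valid_kernels M K n" "f \<in> borel_measurable (PiM {..<n} M)"
    "\<And>h. h \<in> space (PiM {..<n} M) \<Longrightarrow> \<bar>f h\<bar> \<le> B"
  shows "integrable (law M K n) f"
  using assms by (intro integrable_bounded_prob[OF prob_space_law])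
    (auto simp: measurable_cong_sets[OF sets_law[OF assms(1)] refl] space_law)

lemma
  fixes f :: "_ \<Rightarrow> real"
  assumes \<kappa>: "\<kappa> \<in> measurable (PiM {..<n} M) (prob_algebra (M n))" and h: "h \<in> space (PiM {..<n} M)"
    and f: "f \<in> borel_measurable (PiM {..<Suc n} M)"
    and B: "\<And>w. w \<in> space (PiM {..<Suc n} M) \<Longrightarrow> \<bar>f w\<bar> \<le> B"
  shows integrable_fun_upd_history: "integrable (\<kappa> h) (\<lambda>x. f (h(n := x)))"
    and abs_integral_fun_upd_history_le: "\<bar>\<integral>x. f (h(n := x)) \<partial>\<kappa> h\<bar> \<le> B"
proof -
  have upd: "(\<lambda>x. h(n := x)) \<in> measurable (\<kappa> h) (PiM {..<Suc n} M)"
    by (rule measurable_fun_upd_history[OF h prob_kernel_apply(2)[OF \<kappa> h]])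
  have "(\<lambda>x. f (h(n := x))) \<in> borel_measurable (\<kappa> h)" "\<And>x. x \<in> space (\<kappa> h) \<Longrightarrow> \<bar>f (h(n := x))\<bar> \<le> B"
    using measurable_compose[OF upd f] B measurable_space[OF upd] by auto
  then show "integrable (\<kappa> h) (\<lambda>x. f (h(n := x)))" "\<bar>\<integral>x. f (h(n := x)) \<partial>\<kappa> h\<bar> \<le> B"
    using prob_kernel_apply(1)[OF \<kappa> h] by (auto intro: integrable_bounded_prob abs_integral_le_bound_prob)
qed

lemma borel_measurable_integral_fun_upd_history:
  fixes f :: "_ \<Rightarrow> real"
  assumes \<kappa>: "\<kappa> \<in> measurable (PiM {..<n} M) (prob_algebra (M n))"
    and f: "f \<in> borel_measurable (PiM {..<Suc n} M)"
  shows "(\<lambda>h. \<integral>x. f (h(n := x)) \<partial>\<kappa> h) \<in> borel_measurable (PiM {..<n} M)"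
proof -
  have eq: "(\<integral>x. f (h(n := x)) \<partial>\<kappa> h) = (\<integral>w. f w \<partial>extend_kernel M n \<kappa> h)"
    if h: "h \<in> space (PiM {..<n} M)" for h
    unfolding extend_kernel_def
    by (rule integral_distr[symmetric, OF measurable_fun_upd_history[OF h prob_kernel_apply(2)[OF \<kappa> h]]])
      (simp add: f)
  have "(\<lambda>h. \<integral>w. f w \<partial>extend_kernel M n \<kappa> h) \<in> borel_measurable (PiM {..<n} M)"
    by (rule measurable_compose[OF measurable_prob_algebraD[OF measurable_extend_kernel[OF \<kappa>]]
          integral_measurable_subprob_algebra[OF f]])
  then show ?thesis by (subst measurable_cong[OF eq]) auto
qed

section \<open>The g-computation values\<close>

lemma cont_Suc_space:
  assumes "h \<in> space (PiM {..<N - Suc m} M)"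
  shows "cont K Y N (Suc m) h = (\<integral>x. cont K Y N m (h(N - Suc m := x)) \<partial>K (N - Suc m) h)"
proof -
  have "restrict h {..<N - Suc m} = h" using assms by (simp add: space_PiM)
  then show ?thesis by simp
qed

lemma cont_measurable_bounded:
  assumes K: "valid_kernels M K N" and N: "N = Suc m" and Y: "Y \<in> borel_measurable (M m)"
    and YB: "\<And>y. y \<in> space (M m) \<Longrightarrow> \<bar>Y y\<bar> \<le> B"
  shows "k \<le> N \<Longrightarrow> cont K Y N k \<in> borel_measurable (PiM {..<N - k} M) \<and>
      (\<forall>h\<in>space (PiM {..<N - k} M). \<bar>cont K Y N k h\<bar> \<le> B)"
proof (induction k)
  case 0
  have c: "(\<lambda>h. h m) \<in> measurable (PiM {..<N} M) (M m)"
    using N by (intro measurable_component_singleton) auto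
  show ?case using measurable_compose[OF c Y] measurable_space[OF c] YB N by auto
next
  case (Suc k)
  define i where "i = N - Suc k"
  have Ni: "N - k = Suc i" using Suc.prems by (simp add: i_def)
  have IH: "cont K Y N k \<in> borel_measurable (PiM {..<Suc i} M)"
     "\<And>w. w \<in> space (PiM {..<Suc i} M) \<Longrightarrow> \<bar>cont K Y N k w\<bar> \<le> B"
    using Suc by (simp_all add: Ni)
  have Ki: "K i \<in> measurable (PiM {..<i} M) (prob_algebra (M i))"
    using K Suc.prems by (intro valid_kernelsD) (auto simp: i_def)
  have eq: "cont K Y N (Suc k) h = (\<integral>x. cont K Y N k (h(i := x)) \<partial>K i h)"
    if "h \<in> space (PiM {..<i} M)" for h
    using cont_Suc_space[of h N k M K Y] that by (simp add: i_def)
  have "cont K Y N (Suc k) \<in> borel_measurable (PiM {..<i} M)"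
    using borel_measurable_integral_fun_upd_history[OF Ki IH(1)] by (subst measurable_cong[OF eq]) auto
  moreover have "\<bar>cont K Y N (Suc k) h\<bar> \<le> B" if "h \<in> space (PiM {..<i} M)" for h
    using abs_integral_fun_upd_history_le[OF Ki that IH] eq[OF that] by simp
  ultimately show ?case by (simp add: i_def Ni del: cont.simps)
qed

lemma
  assumes K: "valid_kernels M K N" and N: "N = Suc m" and Y: "Y \<in> borel_measurable (M m)"
    and YB: "\<And>y. y \<in> space (M m) \<Longrightarrow> \<bar>Y y\<bar> \<le> B" and n: "n \<le> N"
  shows borel_measurable_val: "val K Y N n \<in> borel_measurable (PiM {..<n} M)"
    and abs_val_le: "\<And>h. h \<in> space (PiM {..<n} M) \<Longrightarrow> \<bar>val K Y N n h\<bar> \<le> B"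
  using cont_measurable_bounded[OF K N Y YB, of "N - n"] n unfolding val_def[abs_def]
  by (auto simp: diff_diff_cancel simp del: cont.simps)

lemma val_Suc:
  assumes "n < N" "h \<in> space (PiM {..<n} M)"
  shows "val K Y N n h = (\<integral>x. val K Y N (Suc n) (h(n := x)) \<partial>K n h)"
proof -
  have "N - n = Suc (N - Suc n)" "N - Suc (N - Suc n) = n" using assms(1) by auto
  then show ?thesis unfolding val_def using cont_Suc_space[of h N "N - Suc n" M K Y] assms(2) by simp
qed

lemma val_self: "val K Y N N = val K' Y N N"
  by (simp add: val_def fun_eq_iff)

lemma integral_val_law_Suc:
  assumes F: "valid_kernels M F N" and N: "N = Suc m" and Y: "Y \<in> borel_measurable (M m)"
    and YB: "\<And>y. y \<in> space (M m) \<Longrightarrow> \<bar>Y y\<bar> \<le> B"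
    and G: "valid_kernels M G (Suc n)" and n: "n < N" and GF: "G n = F n"
  shows "(\<integral>w. val F Y N (Suc n) w \<partial>law M G (Suc n)) = (\<integral>h. val F Y N n h \<partial>law M G n)"
proof -
  have "(\<integral>w. val F Y N (Suc n) w \<partial>law M G (Suc n)) = (\<integral>h. \<integral>x. val F Y N (Suc n) (h(n := x)) \<partial>G n h \<partial>law M G n)"
    using n by (intro integral_law_Suc[OF G borel_measurable_val[OF F N Y YB] abs_val_le[OF F N Y YB]]) auto
  also have "\<dots> = (\<integral>h. val F Y N n h \<partial>law M G n)"
    using n GF valid_kernels_mono[OF G]
    by (intro Bochner_Integration.integral_cong) (auto simp: space_law val_Suc)
  finally show ?thesis .
qed

lemma integral_val_law:
  assumes F: "valid_kernels M F N" and N: "N = Suc m" and Y: "Y \<in> borel_measurable (M m)"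
    and YB: "\<And>y. y \<in> space (M m) \<Longrightarrow> \<bar>Y y\<bar> \<le> B"
  shows "n \<le> N \<Longrightarrow> (\<integral>w. val F Y N n w \<partial>law M F n) = val F Y N 0 (\<lambda>_. undefined)"
proof (induction n)
  case 0
  show ?case using borel_measurable_val[OF F N Y YB, of 0] by (simp add: integral_return)
next
  case (Suc n)
  then show ?case
    using integral_val_law_Suc[OF F N Y YB valid_kernels_mono[OF F Suc.prems]] by simp
qed

section \<open>Marginals of iterated laws\<close>

lemma distr_restrict_extend_kernel:
  assumes \<kappa>: "\<kappa> \<in> measurable (PiM {..<n} M) (prob_algebra (M n))" and h: "h \<in> space (PiM {..<n} M)"
  shows "distr (extend_kernel M n \<kappa> h) (PiM {..<n} M) (\<lambda>w. restrict w {..<n}) = return (PiM {..<n} M) h"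
proof -
  interpret prob_space "\<kappa> h" using prob_kernel_apply(1)[OF \<kappa> h] .
  have upd: "(\<lambda>x. h(n := x)) \<in> measurable (\<kappa> h) (PiM {..<Suc n} M)"
    by (rule measurable_fun_upd_history[OF h prob_kernel_apply(2)[OF \<kappa> h]])
  have "distr (extend_kernel M n \<kappa> h) (PiM {..<n} M) (\<lambda>w. restrict w {..<n})
      = distr (\<kappa> h) (PiM {..<n} M) (\<lambda>x. restrict (h(n := x)) {..<n})"
    unfolding extend_kernel_def by (simp add: distr_distr[OF measurable_restrict_history upd] comp_def)
  also have "\<dots> = distr (\<kappa> h) (PiM {..<n} M) (\<lambda>_. h)"
    by (simp only: restrict_fun_upd_history[OF h])
  also have "\<dots> = return (PiM {..<n} M) h"
    using h by (intro measure_eqI) (auto simp: emeasure_distr emeasure_space_1 indicator_def)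
  finally show ?thesis .
qed

lemma law_marginal_Suc:
  assumes K: "valid_kernels M K (Suc n)"
  shows "distr (law M K (Suc n)) (PiM {..<n} M) (\<lambda>w. restrict w {..<n}) = law M K n"
proof -
  have Kn: "valid_kernels M K n" using valid_kernels_mono[OF K] by simp
  have \<kappa>: "K n \<in> measurable (PiM {..<n} M) (prob_algebra (M n))" using valid_kernelsD[OF K] by simp
  have ne: "space (law M K n) \<noteq> {}" using prob_space.not_empty[OF prob_space_law[OF Kn]] .
  have "distr (law M K (Suc n)) (PiM {..<n} M) (\<lambda>w. restrict w {..<n})
      = bind (law M K n) (\<lambda>h. distr (extend_kernel M n (K n) h) (PiM {..<n} M) (\<lambda>w. restrict w {..<n}))"
    unfolding law_Suc_extend_kernel
    by (rule distr_bind[OF measurable_extend_kernel_subprob[OF sets_law[OF Kn] \<kappa>] ne measurable_restrict_history])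
      simp
  also have "\<dots> = bind (law M K n) (return (PiM {..<n} M))"
    by (intro bind_cong refl) (simp add: space_law[OF Kn] distr_restrict_extend_kernel[OF \<kappa>])
  also have "\<dots> = law M K n" by (rule bind_return''[OF sets_law[OF Kn]])
  finally show ?thesis .
qed

lemma law_marginal:
  assumes "valid_kernels M K n" "k \<le> n"
  shows "distr (law M K n) (PiM {..<k} M) (\<lambda>w. restrict w {..<k}) = law M K k"
proof -
  have self: "distr (law M K m) (PiM {..<m} M) (\<lambda>w. restrict w {..<m}) = law M K m"
    if K: "valid_kernels M K m" for m
  proof -
    have "distr (law M K m) (PiM {..<m} M) (\<lambda>w. restrict w {..<m}) = distr (law M K m) (PiM {..<m} M) (\<lambda>w. w)"
      by (intro distr_cong) (auto simp: space_law[OF K] space_PiM)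
    also have "\<dots> = law M K m" using sets_law[OF K] by (simp add: distr_id2)
    finally show ?thesis .
  qed
  show ?thesis
    using assms
  proof (induction n)
    case 0
    then have "k = 0" by simp
    then show ?case using self[OF "0.prems"(1)] by (simp only:)
  next
    case (Suc n)
    show ?case
    proof (cases "k = Suc n")
      case True
      then show ?thesis using self[OF Suc.prems(1)] by (simp only:)
    next
      case False
      then have kn: "k \<le> n" using Suc.prems by simp
      have Kn: "valid_kernels M K n" using valid_kernels_mono[OF Suc.prems(1)] by simp
      have "distr (law M K (Suc n)) (PiM {..<k} M) (\<lambda>w. restrict w {..<k})
          = distr (distr (law M K (Suc n)) (PiM {..<n} M) (\<lambda>w. restrict w {..<n})) (PiM {..<k} M) (\<lambda>w. restrict w {..<k})"
        using kn by (subst distr_distr)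
          (auto intro!: distr_cong measurable_restrict_history
            simp: measurable_cong_sets[OF sets_law[OF Suc.prems(1)] refl] comp_def Int_absorb2)
      also have "\<dots> = law M K k" using Suc.IH[OF Kn kn] law_marginal_Suc[OF Suc.prems(1)] by (simp only:)
      finally show ?thesis .
    qed
  qed
qed

lemma
  fixes f :: "_ \<Rightarrow> real"
  assumes K: "valid_kernels M K n" and k: "k \<le> n" and f: "f \<in> borel_measurable (PiM {..<k} M)"
  shows integral_law_restrict: "(\<integral>w. f (restrict w {..<k}) \<partial>law M K n) = (\<integral>w. f w \<partial>law M K k)"
    and integrable_law_restrict: "integrable (law M K n) (\<lambda>w. f (restrict w {..<k})) \<longleftrightarrow> integrable (law M K k) f"
proof -
  have r: "(\<lambda>w. restrict w {..<k}) \<in> measurable (law M K n) (PiM {..<k} M)"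
    unfolding measurable_cong_sets[OF sets_law[OF K] refl] using k by (rule measurable_restrict_history)
  note marginal = law_marginal[OF K k, symmetric]
  show "(\<integral>w. f (restrict w {..<k}) \<partial>law M K n) = (\<integral>w. f w \<partial>law M K k)"
    unfolding marginal by (rule integral_distr[symmetric, OF r f])
  show "integrable (law M K n) (\<lambda>w. f (restrict w {..<k})) \<longleftrightarrow> integrable (law M K k) f"
    unfolding marginal by (rule integrable_distr_eq[symmetric, OF r f])
qed

section \<open>Reweighting iterated laws\<close>

lemma emeasure_extend_kernel_density:
  fixes \<rho>' :: "_ \<Rightarrow> real"
  assumes \<kappa>: "\<kappa> \<in> measurable (PiM {..<n} M) (prob_algebra (M n))" and h: "h \<in> space (PiM {..<n} M)"
    and \<rho>': "\<rho>' \<in> borel_measurable (PiM {..<Suc n} M)" and A: "A \<in> sets (PiM {..<Suc n} M)"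
    and eq: "\<kappa>' h = density (\<kappa> h) (\<lambda>x. ennreal (\<rho>' (h(n := x))))"
  shows "emeasure (extend_kernel M n \<kappa>' h) A = (\<integral>\<^sup>+x. ennreal (\<rho>' (h(n := x))) * indicator A (h(n := x)) \<partial>\<kappa> h)"
proof -
  have upd: "(\<lambda>x. h(n := x)) \<in> measurable (\<kappa> h) (PiM {..<Suc n} M)"
    by (rule measurable_fun_upd_history[OF h prob_kernel_apply(2)[OF \<kappa> h]])
  have "emeasure (extend_kernel M n \<kappa>' h) A
      = emeasure (density (\<kappa> h) (\<lambda>x. ennreal (\<rho>' (h(n := x))))) ((\<lambda>x. h(n := x)) -` A \<inter> space (\<kappa> h))"
    unfolding extend_kernel_def eq using A upd
    by (simp add: emeasure_distr measurable_cong_sets[OF sets_density refl])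
  also have "\<dots> = (\<integral>\<^sup>+x. ennreal (\<rho>' (h(n := x))) * indicator ((\<lambda>x. h(n := x)) -` A \<inter> space (\<kappa> h)) x \<partial>\<kappa> h)"
    by (rule emeasure_density) (use measurable_compose[OF upd \<rho>'] measurable_sets[OF upd A] in auto)
  also have "\<dots> = (\<integral>\<^sup>+x. ennreal (\<rho>' (h(n := x))) * indicator A (h(n := x)) \<partial>\<kappa> h)"
    by (rule nn_integral_cong) (auto simp: indicator_def)
  finally show ?thesis .
qed

lemma emeasure_bind_density_extend_kernel:
  fixes \<rho> \<rho>' :: "_ \<Rightarrow> real"
  assumes L: "sets L = sets (PiM {..<n} M)" and ne: "space L \<noteq> {}"
    and \<kappa>: "\<kappa> \<in> measurable (PiM {..<n} M) (prob_algebra (M n))"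
    and \<kappa>': "\<kappa>' \<in> measurable (PiM {..<n} M) (prob_algebra (M n))"
    and \<rho>: "\<rho> \<in> borel_measurable (PiM {..<n} M)" and \<rho>0: "\<And>h. h \<in> space (PiM {..<n} M) \<Longrightarrow> 0 \<le> \<rho> h"
    and \<rho>': "\<rho>' \<in> borel_measurable (PiM {..<Suc n} M)" and \<rho>'0: "\<And>w. w \<in> space (PiM {..<Suc n} M) \<Longrightarrow> 0 \<le> \<rho>' w"
    and eq: "\<And>h. h \<in> space (PiM {..<n} M) \<Longrightarrow> \<kappa>' h = density (\<kappa> h) (\<lambda>x. ennreal (\<rho>' (h(n := x))))"
    and A: "A \<in> sets (PiM {..<Suc n} M)"
  shows "emeasure (bind (density L (\<lambda>h. ennreal (\<rho> h))) (extend_kernel M n \<kappa>')) A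
       = (\<integral>\<^sup>+h. \<integral>\<^sup>+x. ennreal (\<rho> h * \<rho>' (h(n := x))) * indicator A (h(n := x)) \<partial>\<kappa> h \<partial>L)"
proof -
  have "emeasure (bind (density L (\<lambda>h. ennreal (\<rho> h))) (extend_kernel M n \<kappa>')) A
      = (\<integral>\<^sup>+h. emeasure (extend_kernel M n \<kappa>' h) A \<partial>density L (\<lambda>h. ennreal (\<rho> h)))"
    using ne measurable_extend_kernel_subprob[OF _ \<kappa>', of "density L (\<lambda>h. ennreal (\<rho> h))"] L
    by (intro emeasure_bind[OF _ _ A]) auto
  also have "\<dots> = (\<integral>\<^sup>+h. ennreal (\<rho> h) * emeasure (extend_kernel M n \<kappa>' h) A \<partial>L)"
    using \<rho> measurable_emeasure_subprob_algebra[OF A] measurable_extend_kernel_subprob[OF L \<kappa>']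
    by (intro nn_integral_density) (auto simp: measurable_cong_sets[OF L refl])
  also have "\<dots> = (\<integral>\<^sup>+h. \<integral>\<^sup>+x. ennreal (\<rho> h * \<rho>' (h(n := x))) * indicator A (h(n := x)) \<partial>\<kappa> h \<partial>L)"
  proof (rule nn_integral_cong)
    fix h assume "h \<in> space L"
    then have h: "h \<in> space (PiM {..<n} M)" using sets_eq_imp_space_eq[OF L] by simp
    have upd: "(\<lambda>x. h(n := x)) \<in> measurable (\<kappa> h) (PiM {..<Suc n} M)"
      by (rule measurable_fun_upd_history[OF h prob_kernel_apply(2)[OF \<kappa> h]])
    note [measurable] = upd \<rho>' A
    have "ennreal (\<rho> h) * emeasure (extend_kernel M n \<kappa>' h) A
        = ennreal (\<rho> h) * (\<integral>\<^sup>+x. ennreal (\<rho>' (h(n := x))) * indicator A (h(n := x)) \<partial>\<kappa> h)"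
      by (simp only: emeasure_extend_kernel_density[where \<kappa>' = \<kappa>', OF \<kappa> h \<rho>' A eq[OF h]])
    also have "\<dots> = (\<integral>\<^sup>+x. ennreal (\<rho> h) * (ennreal (\<rho>' (h(n := x))) * indicator A (h(n := x))) \<partial>\<kappa> h)"
      by (rule nn_integral_cmult[symmetric]) measurable
    also have "\<dots> = (\<integral>\<^sup>+x. ennreal (\<rho> h * \<rho>' (h(n := x))) * indicator A (h(n := x)) \<partial>\<kappa> h)"
      using \<rho>0[OF h] \<rho>'0 measurable_space[OF upd] by (intro nn_integral_cong) (simp add: ennreal_mult mult.assoc)
    finally show "ennreal (\<rho> h) * emeasure (extend_kernel M n \<kappa>' h) A = \<dots>" .
  qed
  finally show ?thesis .
qed

lemma bind_density_extend_kernel: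
  fixes \<rho> \<rho>' :: "_ \<Rightarrow> real"
  assumes L: "L \<in> space (prob_algebra (PiM {..<n} M))"
    and \<kappa>: "\<kappa> \<in> measurable (PiM {..<n} M) (prob_algebra (M n))"
    and \<kappa>': "\<kappa>' \<in> measurable (PiM {..<n} M) (prob_algebra (M n))"
    and \<rho>: "\<rho> \<in> borel_measurable (PiM {..<n} M)" and \<rho>0: "\<And>h. h \<in> space (PiM {..<n} M) \<Longrightarrow> 0 \<le> \<rho> h"
    and \<rho>': "\<rho>' \<in> borel_measurable (PiM {..<Suc n} M)" and \<rho>'0: "\<And>w. w \<in> space (PiM {..<Suc n} M) \<Longrightarrow> 0 \<le> \<rho>' w"
    and eq: "\<And>h. h \<in> space (PiM {..<n} M) \<Longrightarrow> \<kappa>' h = density (\<kappa> h) (\<lambda>x. ennreal (\<rho>' (h(n := x))))"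
  shows "bind (density L (\<lambda>h. ennreal (\<rho> h))) (extend_kernel M n \<kappa>')
       = density (bind L (extend_kernel M n \<kappa>)) (\<lambda>w. ennreal (\<rho> (restrict w {..<n}) * \<rho>' w))"
proof -
  have sL: "sets L = sets (PiM {..<n} M)" and ne: "space L \<noteq> {}"
    using L prob_space.not_empty by (auto simp: space_prob_algebra)
  have sB: "sets (bind L (extend_kernel M n \<kappa>)) = sets (PiM {..<Suc n} M)"
    by (rule sets_bind_extend_kernel[OF sL ne \<kappa>])
  have sB': "sets (bind (density L (\<lambda>h. ennreal (\<rho> h))) (extend_kernel M n \<kappa>')) = sets (PiM {..<Suc n} M)"
    by (rule sets_bind_extend_kernel[OF _ _ \<kappa>']) (simp_all add: sL ne)
  have F: "(\<lambda>w. \<rho> (restrict w {..<n}) * \<rho>' w) \<in> borel_measurable (PiM {..<Suc n} M)"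
    using measurable_compose[OF measurable_restrict_history \<rho>] \<rho>' by measurable
  show ?thesis
  proof (rule measure_eqI)
    fix A assume "A \<in> sets (bind (density L (\<lambda>h. ennreal (\<rho> h))) (extend_kernel M n \<kappa>'))"
    then have A: "A \<in> sets (PiM {..<Suc n} M)" using sB' by simp
    have "emeasure (bind (density L (\<lambda>h. ennreal (\<rho> h))) (extend_kernel M n \<kappa>')) A
        = (\<integral>\<^sup>+h. \<integral>\<^sup>+x. ennreal (\<rho> h * \<rho>' (h(n := x))) * indicator A (h(n := x)) \<partial>\<kappa> h \<partial>L)"
      by (rule emeasure_bind_density_extend_kernel[where \<kappa>' = \<kappa>', OF sL ne \<kappa> \<kappa>' \<rho> \<rho>0 \<rho>' \<rho>'0 eq A])
    also have "\<dots> = (\<integral>\<^sup>+h. \<integral>\<^sup>+x. ennreal (\<rho> (restrict (h(n := x)) {..<n}) * \<rho>' (h(n := x)))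
        * indicator A (h(n := x)) \<partial>\<kappa> h \<partial>L)"
      by (intro nn_integral_cong) (simp add: restrict_fun_upd_history sets_eq_imp_space_eq[OF sL] del: restrict_fupd)
    also have "\<dots> = (\<integral>\<^sup>+w. ennreal (\<rho> (restrict w {..<n}) * \<rho>' w) * indicator A w \<partial>bind L (extend_kernel M n \<kappa>))"
      by (rule nn_integral_bind_extend_kernel[OF sL \<kappa>, symmetric]) (use F A in measurable)
    also have "\<dots> = emeasure (density (bind L (extend_kernel M n \<kappa>)) (\<lambda>w. ennreal (\<rho> (restrict w {..<n}) * \<rho>' w))) A"
      using F A sB by (intro emeasure_density[symmetric]) (auto simp: measurable_cong_sets[OF sB refl])
    finally show "emeasure (bind (density L (\<lambda>h. ennreal (\<rho> h))) (extend_kernel M n \<kappa>')) A = \<dots>" .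
  qed (use sB sB' in simp)
qed

lemma finite_measure_density_integrable:
  fixes \<rho> :: "_ \<Rightarrow> real"
  assumes "integrable L \<rho>"
  shows "finite_measure (density L (\<lambda>x. ennreal (\<rho> x)))"
proof
  have "emeasure (density L (\<lambda>x. ennreal (\<rho> x))) (space (density L (\<lambda>x. ennreal (\<rho> x)))) = (\<integral>\<^sup>+x. ennreal (\<rho> x) \<partial>L)"
    using borel_measurable_integrable[OF assms] by (simp add: emeasure_density)
  also have "\<dots> \<noteq> \<infinity>" using integrableD(2)[OF assms] .
  finally show "emeasure (density L (\<lambda>x. ennreal (\<rho> x))) (space (density L (\<lambda>x. ennreal (\<rho> x)))) \<noteq> \<infinity>" .
qed

lemma integral_weighted_bind_extend_kernel:
  fixes \<rho> f :: "_ \<Rightarrow> real"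
  assumes L: "L \<in> space (prob_algebra (PiM {..<n} M))"
    and \<kappa>: "\<kappa> \<in> measurable (PiM {..<n} M) (prob_algebra (M n))"
    and \<rho>: "\<rho> \<in> borel_measurable (PiM {..<n} M)" and \<rho>0: "\<And>h. h \<in> space (PiM {..<n} M) \<Longrightarrow> 0 \<le> \<rho> h"
    and \<rho>i: "integrable L \<rho>"
    and f: "f \<in> borel_measurable (PiM {..<Suc n} M)" and B: "\<And>w. w \<in> space (PiM {..<Suc n} M) \<Longrightarrow> \<bar>f w\<bar> \<le> B"
  shows "(\<integral>w. \<rho> (restrict w {..<n}) * f w \<partial>bind L (extend_kernel M n \<kappa>))
       = (\<integral>h. \<rho> h * (\<integral>x. f (h(n := x)) \<partial>\<kappa> h) \<partial>L)"
proof -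
  have sL: "sets L = sets (PiM {..<n} M)" and pL: "prob_space L" using L by (auto simp: space_prob_algebra)
  have spL: "space L = space (PiM {..<n} M)" using sets_eq_imp_space_eq[OF sL] .
  have sB: "sets (bind L (extend_kernel M n \<kappa>)) = sets (PiM {..<Suc n} M)"
    using prob_space.not_empty[OF pL] by (intro sets_bind_extend_kernel[OF sL _ \<kappa>])
  have rm: "(\<lambda>w. \<rho> (restrict w {..<n})) \<in> borel_measurable (PiM {..<Suc n} M)"
    using measurable_compose[OF measurable_restrict_history \<rho>] by simp
  have rm0: "0 \<le> \<rho> (restrict w {..<n})" if "w \<in> space (PiM {..<Suc n} M)" for w
    using \<rho>0[OF measurable_space[OF measurable_restrict_history[of n "Suc n"] that]] by simp
  have "(\<integral>w. \<rho> (restrict w {..<n}) * f w \<partial>bind L (extend_kernel M n \<kappa>))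
      = (\<integral>w. f w \<partial>density (bind L (extend_kernel M n \<kappa>)) (\<lambda>w. ennreal (\<rho> (restrict w {..<n}) * 1)))"
    using f rm rm0
    by (subst integral_density) (auto simp: measurable_cong_sets[OF sB refl] sets_eq_imp_space_eq[OF sB] intro!: AE_I2)
  also have "\<dots> = (\<integral>w. f w \<partial>bind (density L (\<lambda>h. ennreal (\<rho> h))) (extend_kernel M n \<kappa>))"
    by (subst bind_density_extend_kernel[where \<rho>' = "\<lambda>_. 1", OF L \<kappa> \<kappa> \<rho> \<rho>0]) (auto simp: density_1)
  also have "\<dots> = (\<integral>h. \<integral>x. f (h(n := x)) \<partial>\<kappa> h \<partial>density L (\<lambda>h. ennreal (\<rho> h)))"
    using sL finite_measure_density_integrable[OF \<rho>i] by (intro integral_bind_extend_kernel[OF _ _ \<kappa> f B]) auto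
  also have "\<dots> = (\<integral>h. \<rho> h * (\<integral>x. f (h(n := x)) \<partial>\<kappa> h) \<partial>L)"
    using borel_measurable_integral_fun_upd_history[OF \<kappa> f] \<rho> \<rho>0
    by (subst integral_density) (auto simp: measurable_cong_sets[OF sL refl] spL intro!: AE_I2)
  finally show ?thesis .
qed

lemma integrable_mult_bounded:
  fixes f g :: "_ \<Rightarrow> real"
  assumes "integrable \<mu> f" "g \<in> borel_measurable \<mu>" "\<And>x. x \<in> space \<mu> \<Longrightarrow> \<bar>g x\<bar> \<le> C"
  shows "integrable \<mu> (\<lambda>x. f x * g x)"
proof (rule Bochner_Integration.integrable_bound)
  show "integrable \<mu> (\<lambda>x. \<bar>C\<bar> * f x)" using assms(1) by (rule integrable_mult_right)
  show "(\<lambda>x. f x * g x) \<in> borel_measurable \<mu>"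
    using borel_measurable_integrable[OF assms(1)] assms(2) by (rule borel_measurable_times)
  show "AE x in \<mu>. norm (f x * g x) \<le> norm (\<bar>C\<bar> * f x)"
  proof (rule AE_I2)
    fix x assume "x \<in> space \<mu>"
    then have "\<bar>g x\<bar> \<le> \<bar>C\<bar>" using assms(3) by fastforce
    then show "norm (f x * g x) \<le> norm (\<bar>C\<bar> * f x)"
      using mult_left_mono[of "\<bar>g x\<bar>" "\<bar>C\<bar>" "\<bar>f x\<bar>"] by (simp add: abs_mult mult.commute)
  qed
qed

lemma
  fixes \<rho> f c :: "(nat \<Rightarrow> 'w) \<Rightarrow> real"
  assumes K: "valid_kernels M K N" and n: "n < N"
    and \<rho>: "\<rho> \<in> borel_measurable (PiM {..<n} M)" and \<rho>0: "\<And>h. h \<in> space (PiM {..<n} M) \<Longrightarrow> 0 \<le> \<rho> h"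
    and \<rho>i: "integrable (law M K n) \<rho>"
    and f: "f \<in> borel_measurable (PiM {..<Suc n} M)" and fB: "\<And>w. w \<in> space (PiM {..<Suc n} M) \<Longrightarrow> \<bar>f w\<bar> \<le> B"
    and c: "c \<in> borel_measurable (PiM {..<n} M)" and cB: "\<And>h. h \<in> space (PiM {..<n} M) \<Longrightarrow> \<bar>c h\<bar> \<le> B"
  shows integrable_weighted_increment_law:
      "integrable (law M K N) (\<lambda>w. \<rho> (restrict w {..<n}) * (f (restrict w {..<Suc n}) - c (restrict w {..<n})))"
    and integral_weighted_increment_law:
      "(\<integral>w. \<rho> (restrict w {..<n}) * (f (restrict w {..<Suc n}) - c (restrict w {..<n})) \<partial>law M K N)
     = (\<integral>h. \<rho> h * ((\<integral>x. f (h(n := x)) \<partial>K n h) - c h) \<partial>law M K n)"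
proof -
  define d where "d w = f w - c (restrict w {..<n})" for w
  have KS: "valid_kernels M K (Suc n)" and Kn: "valid_kernels M K n"
    using n by (auto intro: valid_kernels_mono[OF K])
  have \<kappa>: "K n \<in> measurable (PiM {..<n} M) (prob_algebra (M n))" using valid_kernelsD[OF K n] .
  have restr: "\<And>w. \<rho> (restrict w {..<n}) * (f (restrict w {..<Suc n}) - c (restrict w {..<n}))
      = (\<lambda>u. \<rho> (restrict u {..<n}) * d u) (restrict w {..<Suc n})"
    by (simp add: d_def Int_absorb1)
  have dm: "d \<in> borel_measurable (PiM {..<Suc n} M)"
    unfolding d_def[abs_def] using f measurable_compose[OF measurable_restrict_history c] by measurable
  have dB: "\<bar>d w\<bar> \<le> 2 * B" if "w \<in> space (PiM {..<Suc n} M)" for w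
    using fB[OF that] cB[OF measurable_space[OF measurable_restrict_history that]] unfolding d_def by linarith
  have \<rho>S: "integrable (law M K (Suc n)) (\<lambda>w. \<rho> (restrict w {..<n}))"
    using integrable_law_restrict[OF KS _ \<rho>] \<rho>i by simp
  have dS: "integrable (law M K (Suc n)) (\<lambda>u. \<rho> (restrict u {..<n}) * d u)"
    using dm dB by (intro integrable_mult_bounded[OF \<rho>S]) (auto simp: measurable_cong_sets[OF sets_law[OF KS] refl] space_law[OF KS])
  have m: "(\<lambda>u. \<rho> (restrict u {..<n}) * d u) \<in> borel_measurable (PiM {..<Suc n} M)"
    using measurable_compose[OF measurable_restrict_history \<rho>] dm by measurable
  show "integrable (law M K N) (\<lambda>w. \<rho> (restrict w {..<n}) * (f (restrict w {..<Suc n}) - c (restrict w {..<n})))"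
    unfolding restr using integrable_law_restrict[OF K _ m] dS n by simp
  have "(\<integral>w. \<rho> (restrict w {..<n}) * (f (restrict w {..<Suc n}) - c (restrict w {..<n})) \<partial>law M K N)
      = (\<integral>u. \<rho> (restrict u {..<n}) * d u \<partial>law M K (Suc n))"
    unfolding restr using integral_law_restrict[OF K _ m] n by simp
  also have "\<dots> = (\<integral>h. \<rho> h * (\<integral>x. d (h(n := x)) \<partial>K n h) \<partial>law M K n)"
    unfolding law_Suc_extend_kernel
    by (rule integral_weighted_bind_extend_kernel[OF law_in_prob_algebra[OF Kn] \<kappa> \<rho> \<rho>0 \<rho>i dm dB])
  also have "\<dots> = (\<integral>h. \<rho> h * ((\<integral>x. f (h(n := x)) \<partial>K n h) - c h) \<partial>law M K n)"
  proof (intro Bochner_Integration.integral_cong refl arg_cong2[where f = "(*)"])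
    fix h assume "h \<in> space (law M K n)"
    then have h: "h \<in> space (PiM {..<n} M)" by (simp add: space_law[OF Kn])
    interpret prob_space "K n h" using prob_kernel_apply(1)[OF \<kappa> h] .
    show "(\<integral>x. d (h(n := x)) \<partial>K n h) = (\<integral>x. f (h(n := x)) \<partial>K n h) - c h"
      unfolding d_def restrict_fun_upd_history[OF h]
      using integrable_fun_upd_history[OF \<kappa> h f fB] by (simp add: prob_space)
  qed
  finally show "(\<integral>w. \<rho> (restrict w {..<n}) * (f (restrict w {..<Suc n}) - c (restrict w {..<n})) \<partial>law M K N)
     = (\<integral>h. \<rho> h * ((\<integral>x. f (h(n := x)) \<partial>K n h) - c h) \<partial>law M K n)" .
qed

lemma wt_restrict: "2 * t \<le> k \<Longrightarrow> wt dens t (restrict w {..<k}) = wt dens t w"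
  unfolding wt_def by (intro prod.cong refl) (simp add: Int_absorb1)

lemma borel_measurable_wt:
  assumes "\<And>r. r < t \<Longrightarrow> dens r \<in> borel_measurable (PiM {..<2 * r + 2} M)" "2 * t \<le> k"
  shows "wt dens t \<in> borel_measurable (PiM {..<k} M)"
  unfolding wt_def[abs_def]
proof (rule borel_measurable_prod)
  fix r assume "r \<in> {..<t}"
  then show "(\<lambda>w. dens r (restrict w {..<2 * r + 2})) \<in> borel_measurable (PiM {..<k} M)"
    using assms by (intro measurable_compose[OF measurable_restrict_history assms(1)]) auto
qed

lemma wt_nonneg:
  assumes "\<And>r w. r < t \<Longrightarrow> w \<in> space (PiM {..<2 * r + 2} M) \<Longrightarrow> 0 \<le> dens r w" "2 * t \<le> k"
    and "w \<in> space (PiM {..<k} M)"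
  shows "0 \<le> wt dens t w"
  unfolding wt_def
proof (rule prod_nonneg)
  fix r assume "r \<in> {..<t}"
  then show "0 \<le> dens r (restrict w {..<2 * r + 2})"
    using assms measurable_space[OF measurable_restrict_history[of "2 * r + 2" k M] assms(3)] by auto
qed

lemma law_Suc_density:
  fixes \<rho> \<rho>' \<sigma> :: "(nat \<Rightarrow> 'w) \<Rightarrow> real"
  assumes K: "valid_kernels M K (Suc m)" and G: "valid_kernels M G (Suc m)"
    and law: "law M G m = density (law M K m) (\<lambda>w. ennreal (\<rho> w))"
    and \<rho>: "\<rho> \<in> borel_measurable (PiM {..<m} M)" and \<rho>0: "\<And>h. h \<in> space (PiM {..<m} M) \<Longrightarrow> 0 \<le> \<rho> h"
    and \<rho>': "\<rho>' \<in> borel_measurable (PiM {..<Suc m} M)" and \<rho>'0: "\<And>w. w \<in> space (PiM {..<Suc m} M) \<Longrightarrow> 0 \<le> \<rho>' w"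
    and eq: "\<And>h. h \<in> space (PiM {..<m} M) \<Longrightarrow> G m h = density (K m h) (\<lambda>x. ennreal (\<rho>' (h(m := x))))"
    and \<sigma>: "\<sigma> \<in> borel_measurable (PiM {..<Suc m} M)"
    and \<sigma>_eq: "\<And>w. w \<in> space (PiM {..<Suc m} M) \<Longrightarrow> \<sigma> w = \<rho> (restrict w {..<m}) * \<rho>' w"
  shows "law M G (Suc m) = density (law M K (Suc m)) (\<lambda>w. ennreal (\<sigma> w))"
proof -
  have Km: "valid_kernels M K m" using valid_kernels_mono[OF K] by simp
  have "law M G (Suc m) = density (law M K (Suc m)) (\<lambda>w. ennreal (\<rho> (restrict w {..<m}) * \<rho>' w))"
    unfolding law_Suc_extend_kernel law
    using valid_kernelsD[OF K] valid_kernelsD[OF G]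
    by (intro bind_density_extend_kernel[OF law_in_prob_algebra[OF Km] _ _ \<rho> \<rho>0 \<rho>' \<rho>'0 eq]) auto
  also have "\<dots> = density (law M K (Suc m)) (\<lambda>w. ennreal (\<sigma> w))"
    using \<sigma> \<sigma>_eq measurable_compose[OF measurable_restrict_history \<rho>] \<rho>'
    by (intro density_cong AE_I2) (auto simp: measurable_cong_sets[OF sets_law[OF K] refl] space_law[OF K])
  finally show ?thesis .
qed

section \<open>The mean of the efficient influence function\<close>

lemma integral_EIF:
  fixes Ehat g K :: "nat \<Rightarrow> (nat \<Rightarrow> 'w) \<Rightarrow> 'w measure" and Y :: "'w \<Rightarrow> real" and \<tau> :: nat
  defines "V \<equiv> val (interleave Ehat g) Y (2 * \<tau> + 1)"
  assumes F: "valid_kernels M (interleave Ehat g) (2 * \<tau> + 1)" and K: "valid_kernels M K (2 * \<tau> + 1)"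
    and Y: "Y \<in> borel_measurable (M (2 * \<tau>))" and YB: "\<And>y. y \<in> space (M (2 * \<tau>)) \<Longrightarrow> \<bar>Y y\<bar> \<le> B"
    and dens_meas: "\<And>s. s < \<tau> \<Longrightarrow> dens s \<in> borel_measurable (PiM {..<2 * s + 2} M)"
    and dens_nonneg: "\<And>s w. s < \<tau> \<Longrightarrow> w \<in> space (PiM {..<2 * s + 2} M) \<Longrightarrow> 0 \<le> dens s w"
    and wt_int: "\<And>t. t \<in> {1..\<tau>} \<Longrightarrow> integrable (law M K (2 * t)) (wt dens t)"
  shows "(\<integral>w. EIF Ehat g dens Y \<tau> w \<partial>law M K (2 * \<tau> + 1))
      = (\<integral>h. V 1 h \<partial>law M K 1) - psi Ehat g Y \<tau>
        + (\<Sum>t\<in>{1..\<tau>}. \<integral>h. wt dens t h * ((\<integral>x. V (2 * t + 1) (h(2 * t := x)) \<partial>K (2 * t) h) - V (2 * t) h)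
             \<partial>law M K (2 * t))"
proof -
  let ?N = "2 * \<tau> + 1"
  note Vm = borel_measurable_val[OF F _ Y YB, folded V_def, simplified]
    and VB = abs_val_le[OF F _ Y YB, folded V_def, simplified]
  define incr where "incr t w = wt dens t (restrict w {..<2 * t})
      * (V (2 * t + 1) (restrict w {..<Suc (2 * t)}) - V (2 * t) (restrict w {..<2 * t}))" for t w
  have incr: "integrable (law M K ?N) (incr t) \<and> (\<integral>w. incr t w \<partial>law M K ?N)
      = (\<integral>h. wt dens t h * ((\<integral>x. V (2 * t + 1) (h(2 * t := x)) \<partial>K (2 * t) h) - V (2 * t) h) \<partial>law M K (2 * t))"
    if t: "t \<in> {1..\<tau>}" for t
  proof -
    have "wt dens t \<in> borel_measurable (PiM {..<2 * t} M)" "\<And>h. h \<in> space (PiM {..<2 * t} M) \<Longrightarrow> 0 \<le> wt dens t h"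
      using t dens_meas dens_nonneg by (auto intro!: borel_measurable_wt wt_nonneg)
    note weighted = this wt_int[OF t] Vm[of "Suc (2 * t)"] VB[of "Suc (2 * t)"] Vm[of "2 * t"] VB[of "2 * t"]
    show ?thesis
      using integrable_weighted_increment_law[OF K _ weighted] integral_weighted_increment_law[OF K _ weighted] t
      unfolding incr_def[abs_def] by simp
  qed
  have V1: "integrable (law M K ?N) (\<lambda>w. V 1 (restrict w {..<1}))"
    "(\<integral>w. V 1 (restrict w {..<1}) \<partial>law M K ?N) = (\<integral>h. V 1 h \<partial>law M K 1)"
    using integrable_law_restrict[OF K _ Vm] integral_law_restrict[OF K _ Vm]
      integrable_law_bounded[OF valid_kernels_mono[OF K] Vm VB, of 1] by simp_all
  have EIF_eq: "EIF Ehat g dens Y \<tau> w = (V 1 (restrict w {..<1}) - psi Ehat g Y \<tau>) + (\<Sum>t\<in>{1..\<tau>}. incr t w)" for w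
    by (simp add: EIF_def V_def incr_def wt_restrict)
  interpret prob_space "law M K (Suc (2 * \<tau>))" using prob_space_law[OF K] by simp
  have sum_int: "integrable (law M K ?N) (\<lambda>w. \<Sum>t\<in>{1..\<tau>}. incr t w)"
    using incr by (intro Bochner_Integration.integrable_sum) auto
  have "(\<integral>w. EIF Ehat g dens Y \<tau> w \<partial>law M K ?N)
      = (\<integral>w. V 1 (restrict w {..<1}) - psi Ehat g Y \<tau> \<partial>law M K ?N) + (\<integral>w. (\<Sum>t\<in>{1..\<tau>}. incr t w) \<partial>law M K ?N)"
    unfolding EIF_eq using V1(1) sum_int by (intro Bochner_Integration.integral_add) auto
  also have "\<dots> = (\<integral>h. V 1 h \<partial>law M K 1) - psi Ehat g Y \<tau> + (\<Sum>t\<in>{1..\<tau>}. \<integral>w. incr t w \<partial>law M K ?N)"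
    using V1 incr by (simp add: Bochner_Integration.integral_diff Bochner_Integration.integral_sum prob_space)
  also have "(\<Sum>t\<in>{1..\<tau>}. \<integral>w. incr t w \<partial>law M K ?N) = (\<Sum>t\<in>{1..\<tau>}. \<integral>h. wt dens t h
      * ((\<integral>x. V (2 * t + 1) (h(2 * t := x)) \<partial>K (2 * t) h) - V (2 * t) h) \<partial>law M K (2 * t))"
    using incr by (intro sum.cong) auto
  finally show ?thesis .
qed

section \<open>Changing the treatment mechanism to the policy\<close>

context
  fixes M :: "nat \<Rightarrow> 'w measure" and \<tau> :: nat and E Trthat g :: "nat \<Rightarrow> (nat \<Rightarrow> 'w) \<Rightarrow> 'w measure"
    and dens :: "nat \<Rightarrow> (nat \<Rightarrow> 'w) \<Rightarrow> real"
  assumes E_meas: "\<And>s. s \<le> \<tau> \<Longrightarrow> E s \<in> measurable (PiM {..<2 * s} M) (prob_algebra (M (2 * s)))"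
    and Th_meas: "\<And>s. s < \<tau> \<Longrightarrow> Trthat s \<in> measurable (PiM {..<2 * s + 1} M) (prob_algebra (M (2 * s + 1)))"
    and g_meas: "\<And>s. s < \<tau> \<Longrightarrow> g s \<in> measurable (PiM {..<2 * s + 1} M) (prob_algebra (M (2 * s + 1)))"
    and dens_meas: "\<And>s. s < \<tau> \<Longrightarrow> dens s \<in> borel_measurable (PiM {..<2 * s + 2} M)"
    and dens_nonneg: "\<And>s w. s < \<tau> \<Longrightarrow> w \<in> space (PiM {..<2 * s + 2} M) \<Longrightarrow> 0 \<le> dens s w"
    and g_density: "\<And>s h. s < \<tau> \<Longrightarrow> h \<in> space (PiM {..<2 * s + 1} M) \<Longrightarrow>
                      g s h = density (Trthat s h) (\<lambda>a. ennreal (dens s (h(2 * s + 1 := a))))"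
begin

lemma law_interleave_density:
  "m \<le> 2 * \<tau> \<Longrightarrow> law M (interleave E g) m = density (law M (interleave E Trthat) m) (\<lambda>w. ennreal (wt dens (m div 2) w))"
proof (induction m)
  case 0
  show ?case by (simp add: wt_def density_1)
next
  case (Suc m)
  have K: "valid_kernels M (interleave E Trthat) (Suc m)" and G: "valid_kernels M (interleave E g) (Suc m)"
    using Suc.prems by (auto intro: valid_kernels_mono[OF valid_kernels_interleave] E_meas Th_meas g_meas)
  have wm: "wt dens (k div 2) \<in> borel_measurable (PiM {..<k} M)" if "k \<le> Suc m" for k
    using that Suc.prems dens_meas by (intro borel_measurable_wt) auto
  have wn: "\<And>h. h \<in> space (PiM {..<m} M) \<Longrightarrow> 0 \<le> wt dens (m div 2) h"
    using Suc.prems dens_nonneg by (intro wt_nonneg) auto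
  note step = law_Suc_density[OF K G Suc.IH wm[of m] wn _ _ _ wm[of "Suc m"]]
  show ?case
  proof (cases "even m")
    case True
    show ?thesis
      using True Suc.prems by (intro step[where \<rho>' = "\<lambda>_. 1"]) (auto simp: density_1 wt_restrict elim!: evenE)
  next
    case False
    then obtain s where m: "m = Suc (2 * s)" by (metis oddE add.commute plus_1_eq_Suc)
    have s: "s < \<tau>" using Suc.prems m by simp
    have "wt dens (Suc s) w = wt dens s (restrict w {..<m}) * dens s w" if "w \<in> space (PiM {..<Suc m} M)" for w
    proof -
      have "restrict w {..<2 * s + 2} = w" using that m by (simp add: space_PiM PiE_restrict)
      then have "wt dens (Suc s) w = wt dens s w * dens s w" by (simp add: wt_def)
      then show ?thesis using m wt_restrict[of s m dens w] by simp
    qed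
    then show ?thesis
      using m s dens_meas[OF s] dens_nonneg[OF s] g_density[OF s] by (intro step[where \<rho>' = "dens s"]) auto
  qed
qed

context
  fixes Ehat :: "nat \<Rightarrow> (nat \<Rightarrow> 'w) \<Rightarrow> 'w measure" and Y :: "'w \<Rightarrow> real" and B :: real
  assumes Ehat_meas: "\<And>s. s \<le> \<tau> \<Longrightarrow> Ehat s \<in> measurable (PiM {..<2 * s} M) (prob_algebra (M (2 * s)))"
    and Y_meas: "Y \<in> borel_measurable (M (2 * \<tau>))"
    and Y_bound: "\<And>y. y \<in> space (M (2 * \<tau>)) \<Longrightarrow> \<bar>Y y\<bar> \<le> B"
begin

abbreviation Vhat :: "nat \<Rightarrow> (nat \<Rightarrow> 'w) \<Rightarrow> real" where
  "Vhat \<equiv> val (interleave Ehat g) Y (2 * \<tau> + 1)"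

lemma valid_kernels_estimate: "valid_kernels M (interleave Ehat g) (2 * \<tau> + 1)"
  by (rule valid_kernels_interleave[OF Ehat_meas g_meas])

lemma
  assumes "n \<le> 2 * \<tau> + 1"
  shows borel_measurable_Vhat: "Vhat n \<in> borel_measurable (PiM {..<n} M)"
    and abs_Vhat_le: "\<And>h. h \<in> space (PiM {..<n} M) \<Longrightarrow> \<bar>Vhat n h\<bar> \<le> B"
  using borel_measurable_val[OF valid_kernels_estimate _ Y_meas Y_bound] abs_val_le[OF valid_kernels_estimate _ Y_meas Y_bound]
    assms by simp_all

lemma integral_weighted_residual_policy:
  assumes t: "t \<in> {1..\<tau>}"
  shows "(\<integral>h. wt dens t h * ((\<integral>x. Vhat (2 * t + 1) (h(2 * t := x)) \<partial>E t h) - Vhat (2 * t) h)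
           \<partial>law M (interleave E Trthat) (2 * t))
       = (\<integral>h. Vhat (2 * t + 1) h \<partial>law M (interleave E g) (2 * t + 1))
         - (\<integral>h. Vhat (2 * t - 1) h \<partial>law M (interleave E g) (2 * t - 1))"
proof -
  obtain u where u: "t = Suc u" using t by (cases t) auto
  have G: "valid_kernels M (interleave E g) (Suc (2 * t))"
    using t by (intro valid_kernels_mono[OF valid_kernels_interleave[OF E_meas g_meas]]) auto
  have Et: "E t \<in> measurable (PiM {..<2 * t} M) (prob_algebra (M (2 * t)))" using t E_meas by simp
  have Vt: "Vhat (Suc (2 * t)) \<in> borel_measurable (PiM {..<Suc (2 * t)} M)"
    "\<And>w. w \<in> space (PiM {..<Suc (2 * t)} M) \<Longrightarrow> \<bar>Vhat (Suc (2 * t)) w\<bar> \<le> B"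
    using borel_measurable_Vhat[of "Suc (2 * t)"] abs_Vhat_le[of "Suc (2 * t)"] t by auto
  have V2t: "Vhat (2 * t) \<in> borel_measurable (PiM {..<2 * t} M)"
    "\<And>h. h \<in> space (PiM {..<2 * t} M) \<Longrightarrow> \<bar>Vhat (2 * t) h\<bar> \<le> B"
    using borel_measurable_Vhat[of "2 * t"] abs_Vhat_le[of "2 * t"] t by auto
  have G2t: "valid_kernels M (interleave E g) (2 * t)" using valid_kernels_mono[OF G] by simp
  have inner: "integrable (law M (interleave E g) (2 * t)) (\<lambda>h. \<integral>x. Vhat (2 * t + 1) (h(2 * t := x)) \<partial>E t h)"
    using borel_measurable_integral_fun_upd_history[OF Et Vt(1)] abs_integral_fun_upd_history_le[OF Et _ Vt]
    by (intro integrable_law_bounded[OF G2t]) auto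
  have Kh: "valid_kernels M (interleave E Trthat) (2 * t)"
    using t by (intro valid_kernels_mono[OF valid_kernels_interleave[OF E_meas Th_meas]]) auto
  have change: "law M (interleave E g) (2 * t) = density (law M (interleave E Trthat) (2 * t)) (\<lambda>w. ennreal (wt dens t w))"
    using law_interleave_density[of "2 * t"] t by simp
  have wm: "wt dens t \<in> borel_measurable (PiM {..<2 * t} M)"
    and wn: "\<And>h. h \<in> space (PiM {..<2 * t} M) \<Longrightarrow> 0 \<le> wt dens t h"
    using t dens_meas dens_nonneg by (auto intro!: borel_measurable_wt wt_nonneg)
  have "(\<lambda>h. (\<integral>x. Vhat (2 * t + 1) (h(2 * t := x)) \<partial>E t h) - Vhat (2 * t) h) \<in> borel_measurable (PiM {..<2 * t} M)"
    using borel_measurable_integral_fun_upd_history[OF Et Vt(1)] V2t(1) by simp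
  then have "(\<integral>h. wt dens t h * ((\<integral>x. Vhat (2 * t + 1) (h(2 * t := x)) \<partial>E t h) - Vhat (2 * t) h)
        \<partial>law M (interleave E Trthat) (2 * t))
      = (\<integral>h. (\<integral>x. Vhat (2 * t + 1) (h(2 * t := x)) \<partial>E t h) - Vhat (2 * t) h \<partial>law M (interleave E g) (2 * t))"
    unfolding change using wm wn
    by (subst integral_density) (auto simp: measurable_cong_sets[OF sets_law[OF Kh] refl] space_law[OF Kh] intro!: AE_I2)
  also have "\<dots> = (\<integral>h. \<integral>x. Vhat (2 * t + 1) (h(2 * t := x)) \<partial>E t h \<partial>law M (interleave E g) (2 * t))
      - (\<integral>h. Vhat (2 * t) h \<partial>law M (interleave E g) (2 * t))"
    using inner integrable_law_bounded[OF G2t V2t] by (rule Bochner_Integration.integral_diff)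
  also have "(\<integral>h. \<integral>x. Vhat (2 * t + 1) (h(2 * t := x)) \<partial>E t h \<partial>law M (interleave E g) (2 * t))
      = (\<integral>h. Vhat (2 * t + 1) h \<partial>law M (interleave E g) (2 * t + 1))"
    using integral_law_Suc[OF G Vt] by simp
  also have "(\<integral>h. Vhat (2 * t) h \<partial>law M (interleave E g) (2 * t))
      = (\<integral>h. Vhat (2 * t - 1) h \<partial>law M (interleave E g) (2 * t - 1))"
    \<comment> \<open>the estimated and the true model both use the policy g at the treatment position 2t - 1\<close>
    using integral_val_law_Suc[OF valid_kernels_estimate _ Y_meas Y_bound, of "interleave E g" "Suc (2 * u)"]
      G2t t u by simp
  finally show ?thesis .
qed

lemma sum_weighted_residual_policy:
  "(\<Sum>t\<in>{1..\<tau>}. \<integral>h. wt dens t h * ((\<integral>x. Vhat (2 * t + 1) (h(2 * t := x)) \<partial>E t h) - Vhat (2 * t) h)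
      \<partial>law M (interleave E Trthat) (2 * t))
   = psi E g Y \<tau> - (\<integral>h. Vhat 1 h \<partial>law M (interleave E g) 1)"
proof -
  define R where "R t = (\<integral>h. wt dens t h * ((\<integral>x. Vhat (2 * t + 1) (h(2 * t := x)) \<partial>E t h) - Vhat (2 * t) h)
      \<partial>law M (interleave E Trthat) (2 * t))" for t
  define \<beta> where "\<beta> u = (\<integral>h. Vhat (2 * u + 1) h \<partial>law M (interleave E g) (2 * u + 1))" for u
  have "R t = \<beta> (Suc t - 1) - \<beta> (t - 1)" if t: "t \<in> {1..\<tau>}" for t
  proof -
    obtain u where "t = Suc u" using t by (cases t) auto
    then show ?thesis using integral_weighted_residual_policy[OF t] by (simp add: R_def \<beta>_def)
  qed
  then have "(\<Sum>t\<in>{1..\<tau>}. R t) = \<beta> \<tau> - \<beta> 0"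
    using sum_Suc_diff[of 1 \<tau> "\<lambda>t. \<beta> (t - 1)"] by simp
  also have "\<beta> \<tau> = psi E g Y \<tau>"
  proof -
    have G: "valid_kernels M (interleave E g) (2 * \<tau> + 1)"
      by (rule valid_kernels_interleave[OF E_meas g_meas])
    have "\<beta> \<tau> = (\<integral>h. val (interleave E g) Y (2 * \<tau> + 1) (2 * \<tau> + 1) h \<partial>law M (interleave E g) (2 * \<tau> + 1))"
      unfolding \<beta>_def by (simp only: val_self[of "interleave Ehat g" Y "2 * \<tau> + 1" "interleave E g"])
    also have "\<dots> = psi E g Y \<tau>"
      unfolding psi_def by (rule integral_val_law[OF G _ Y_meas Y_bound]) simp_all
    finally show ?thesis .
  qed
  finally show ?thesis by (simp add: R_def \<beta>_def)
qed

end

end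

theorem theoremC1:
  fixes M :: "nat \<Rightarrow> 'w measure"
    and \<tau> :: nat
    and E Ehat Trt Trthat g :: "nat \<Rightarrow> (nat \<Rightarrow> 'w) \<Rightarrow> 'w measure"
    and dens :: "nat \<Rightarrow> (nat \<Rightarrow> 'w) \<Rightarrow> real"
    and Y :: "'w \<Rightarrow> real"
  assumes E_meas: "\<And>s. s \<le> \<tau> \<Longrightarrow> E s \<in> measurable (PiM {..<2 * s} M) (prob_algebra (M (2 * s)))"
    and Ehat_meas: "\<And>s. s \<le> \<tau> \<Longrightarrow> Ehat s \<in> measurable (PiM {..<2 * s} M) (prob_algebra (M (2 * s)))"
    and Pi_meas: "\<And>s. s < \<tau> \<Longrightarrow> Trt s \<in> measurable (PiM {..<2 * s + 1} M) (prob_algebra (M (2 * s + 1)))"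
    and Pihat_meas: "\<And>s. s < \<tau> \<Longrightarrow> Trthat s \<in> measurable (PiM {..<2 * s + 1} M) (prob_algebra (M (2 * s + 1)))"
    and g_meas: "\<And>s. s < \<tau> \<Longrightarrow> g s \<in> measurable (PiM {..<2 * s + 1} M) (prob_algebra (M (2 * s + 1)))"
    and Y_meas: "Y \<in> borel_measurable (M (2 * \<tau>))"
    and Y_bdd: "\<exists>B. \<forall>y\<in>space (M (2 * \<tau>)). \<bar>Y y\<bar> \<le> B"
    and dens_meas: "\<And>s. s < \<tau> \<Longrightarrow> dens s \<in> borel_measurable (PiM {..<2 * s + 2} M)"
    and dens_nonneg: "\<And>s w. s < \<tau> \<Longrightarrow> w \<in> space (PiM {..<2 * s + 2} M) \<Longrightarrow> 0 \<le> dens s w"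
    and g_density: "\<And>s h. s < \<tau> \<Longrightarrow> h \<in> space (PiM {..<2 * s + 1} M) \<Longrightarrow>
                      g s h = density (Trthat s h) (\<lambda>a. ennreal (dens s (h(2 * s + 1 := a))))"
    and wt_integrable: "\<And>t. t \<in> {1..\<tau>} \<Longrightarrow>
                      integrable (law M (interleave E Trt) (2 * t)) (wt dens t)"
  shows "psi Ehat g Y \<tau> - psi E g Y \<tau> + (\<integral>w. EIF Ehat g dens Y \<tau> w \<partial>law M (interleave E Trt) (2 * \<tau> + 1))
     = (\<Sum>t\<in>{1..\<tau>}.
          (\<integral>w. wt dens t w * ((\<integral>x. val (interleave Ehat g) Y (2 * \<tau> + 1) (2 * t + 1) (w(2 * t := x)) \<partial>E t w)
                                 - val (interleave Ehat g) Y (2 * \<tau> + 1) (2 * t) w)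
              \<partial>law M (interleave E Trt) (2 * t))
        - (\<integral>w. wt dens t w * ((\<integral>x. val (interleave Ehat g) Y (2 * \<tau> + 1) (2 * t + 1) (w(2 * t := x)) \<partial>E t w)
                                 - val (interleave Ehat g) Y (2 * \<tau> + 1) (2 * t) w)
              \<partial>law M (interleave E Trthat) (2 * t)))"
proof -
  obtain B where YB: "\<And>y. y \<in> space (M (2 * \<tau>)) \<Longrightarrow> \<bar>Y y\<bar> \<le> B" using Y_bdd by blast
  have "law M (interleave E g) 1 = law M (interleave E Trt) 1"
    by (rule law_cong) (simp add: interleave_def)
  then show ?thesis
    using integral_EIF[OF valid_kernels_interleave[OF Ehat_meas g_meas] valid_kernels_interleave[OF E_meas Pi_meas]
        Y_meas YB dens_meas dens_nonneg wt_integrable]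
      sum_weighted_residual_policy[OF E_meas Pihat_meas g_meas dens_meas dens_nonneg g_density Ehat_meas Y_meas YB]
    by (simp add: sum_subtractf)
qed

end
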